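(* Let $\alpha,\beta>-1$, $j\in\mathbb{N}\cup\{0\}$, $M>0$. Let $\{p_n^{(\alpha,\beta)}\}_{n\ge0}$ be the orthonormal Jacobi polynomials (positive leading coefficients) with respect to $(1-x)^\alpha(1+x)^\beta$ on $(-1,1)$, let $\lambda_n=n^2+n(\alpha+\beta+1)$, $K_n^{(j,j)}(1,1)=\sum_{i=0}^n\big((p_i^{(\alpha,\beta)})^{(j)}(1)\big)^2$, and define $$\widetilde\lambda_n=\lambda_n+M\sum_{i=j+1}^n(\lambda_i-\lambda_{i-1})K_{i-1}^{(j,j)}(1,1),\qquad n\ge j+1.$$ Then $$\lim_{n\to+\infty}\frac{\widetilde\lambda_n}{n^{4j+2\alpha+4}}=\frac{M}{2^{2j+\alpha+\beta+1}(2j+\alpha+2)(2j+\alpha+1)\Gamma^2(\alpha+j+1)}.$$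
   Context: Background: $\lambda_n$ are the eigenvalues of the Jacobi differential equation $(x^2-1)y''+(\alpha-\beta+(\alpha+\beta+2)x)y'=\lambda_n y$, and $\widetilde\lambda_n$ are the eigenvalues of the differential operator $\mathbf{L}$ having as eigenfunctions the polynomials orthonormal with respect to $(f,g)=\int_{-1}^1 fg(1-x)^\alpha(1+x)^\beta dx+Mf^{(j)}(1)g^{(j)}(1)$ (with the free parameters $\alpha_1=\dots=\alpha_j=0$). *)

theory Defs
  imports "HOL-Analysis.Analysis" "HOL-Computational_Algebra.Polynomial"
begin

definition jacobi_weight :: "real \<Rightarrow> real \<Rightarrow> real \<Rightarrow> real" where
  "jacobi_weight \<alpha> \<beta> x = (1 - x) powr \<alpha> * (1 + x) powr \<beta>"

definition orthonormal_jacobi :: "real \<Rightarrow> real \<Rightarrow> (nat \<Rightarrow> real poly) \<Rightarrow> bool" where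
  "orthonormal_jacobi \<alpha> \<beta> p \<longleftrightarrow>
     (\<forall>n. degree (p n) = n \<and> lead_coeff (p n) > 0) \<and>
     (\<forall>m n. set_integrable lborel {-1<..<1}
                (\<lambda>x. poly (p m) x * poly (p n) x * jacobi_weight \<alpha> \<beta> x) \<and>
             (LINT x:{-1<..<1}|lborel. poly (p m) x * poly (p n) x * jacobi_weight \<alpha> \<beta> x)
               = (if m = n then 1 else 0))"

definition jac_lambda :: "real \<Rightarrow> real \<Rightarrow> nat \<Rightarrow> real" where
  "jac_lambda \<alpha> \<beta> n = real n ^ 2 + real n * (\<alpha> + \<beta> + 1)"

definition kernel_jj :: "(nat \<Rightarrow> real poly) \<Rightarrow> nat \<Rightarrow> nat \<Rightarrow> real" where
  "kernel_jj p j n = (\<Sum>i=0..n. (poly ((pderiv ^^ j) (p i)) 1) ^ 2)"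

text \<open>tilde lambda_n; meaningful for n \<ge> j+1 (the limit only concerns large n).\<close>
definition lambda_tilde :: "real \<Rightarrow> real \<Rightarrow> real \<Rightarrow> (nat \<Rightarrow> real poly) \<Rightarrow> nat \<Rightarrow> nat \<Rightarrow> real" where
  "lambda_tilde \<alpha> \<beta> M p j n = jac_lambda \<alpha> \<beta> n
     + M * (\<Sum>i=j+1..n. (jac_lambda \<alpha> \<beta> i - jac_lambda \<alpha> \<beta> (i - 1)) * kernel_jj p j (i - 1))"

end

(*
  Write q_n for the Jacobi polynomial normalised by q_n(1) = 1; in t = (1 - x) / 2 it is the
  terminating hypergeometric sum of (-1)^k C(n,k) (n+alpha+beta+1)_k / (alpha+1)_k t^k.  Its moments
  against the weight are Beta integrals, so orthogonality to lower degrees reduces to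
  n-th finite differences sum_k (-1)^k C(n,k) f(k) of polynomials f of degree < n, which vanish;
  a partial fraction in k gives ||q_n||^2 in the same way.  Hence p_n = +-q_n / ||q_n||, and
  p_n^(j)(1) is read off the t^j coefficient of q_n.  Gamma asymptotics give
  (p_n^(j)(1))^2 ~ n^(4j+2alpha+1) / (2^(2j+alpha+beta) Gamma(alpha+j+1)^2), and two
  applications of the Stolz-Cesaro theorem carry this over to K_n^(j,j)(1,1) and to the
  sum defining lambda~_n, whose first term lambda_n = O(n^2) is negligible.
*)
theory Submission
  imports Defs "HOL-Real_Asymp.Real_Asymp"
begin

section \<open>Integrals against the Jacobi weight\<close>

lemma set_integrable_if_nonneg_has_integral:
  fixes f :: "real \<Rightarrow> real"
  assumes S: "S \<in> sets borel" and f: "f \<in> borel_measurable borel"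
    and nonneg: "\<And>x. x \<in> S \<Longrightarrow> 0 \<le> f x" and I: "(f has_integral I) S"
  shows "set_integrable lborel S f \<and> (LINT x:S|lborel. f x) = I"
proof -
  define h where "h x = indicator S x * f x" for x
  have h_measurable: "h \<in> borel_measurable borel"
    unfolding h_def using S f by measurable
  have h_nonneg: "\<And>x. 0 \<le> h x"
    using nonneg by (simp add: h_def indicator_def)
  have "h = (\<lambda>x. if x \<in> S then f x else 0)"
    by (auto simp: h_def indicator_def)
  then have h_integral: "(h has_integral I) UNIV"
    using I by (simp add: has_integral_restrict_UNIV)
  have "integrable lborel h"
    using nn_integral_has_integral_lborel[OF h_measurable h_nonneg h_integral]
    by (intro integrableI_nonneg) (use h_measurable h_nonneg in auto)
  moreover from this have "integral\<^sup>L lborel h = I"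
    by (metis has_integral_integral_lborel has_integral_unique h_integral)
  ultimately show ?thesis
    unfolding set_integrable_def set_lebesgue_integral_def h_def by simp
qed

definition jacobi_integrable :: "real \<Rightarrow> real \<Rightarrow> (real \<Rightarrow> real) \<Rightarrow> bool" where
  "jacobi_integrable \<alpha> \<beta> f \<longleftrightarrow>
     set_integrable lborel {-1<..<1} (\<lambda>x. f x * jacobi_weight \<alpha> \<beta> x)"

definition jacobi_integral :: "real \<Rightarrow> real \<Rightarrow> (real \<Rightarrow> real) \<Rightarrow> real" where
  "jacobi_integral \<alpha> \<beta> f = (LINT x:{-1<..<1}|lborel. f x * jacobi_weight \<alpha> \<beta> x)"

lemma jacobi_integrable_sum:
  "(\<And>i. i \<in> I \<Longrightarrow> jacobi_integrable \<alpha> \<beta> (f i)) \<Longrightarrow>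
     jacobi_integrable \<alpha> \<beta> (\<lambda>x. \<Sum>i\<in>I. f i x)"
  unfolding jacobi_integrable_def set_integrable_def
  by (auto intro!: integrable_sum simp: sum_distrib_left sum_distrib_right)

lemma jacobi_integral_sum:
  "(\<And>i. i \<in> I \<Longrightarrow> jacobi_integrable \<alpha> \<beta> (f i)) \<Longrightarrow>
     jacobi_integral \<alpha> \<beta> (\<lambda>x. \<Sum>i\<in>I. f i x) = (\<Sum>i\<in>I. jacobi_integral \<alpha> \<beta> (f i))"
  unfolding jacobi_integrable_def jacobi_integral_def set_integrable_def set_lebesgue_integral_def
  by (simp add: sum_distrib_left sum_distrib_right integral_sum)

lemma jacobi_integrable_cmult:
  "jacobi_integrable \<alpha> \<beta> f \<Longrightarrow> jacobi_integrable \<alpha> \<beta> (\<lambda>x. c * f x)"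
  unfolding jacobi_integrable_def by (simp add: mult.assoc)

lemma jacobi_integral_cmult:
  "jacobi_integral \<alpha> \<beta> (\<lambda>x. c * f x) = c * jacobi_integral \<alpha> \<beta> f"
  unfolding jacobi_integral_def by (simp add: mult.assoc)

lemma has_integral_jacobi_moment:
  assumes "\<alpha> > -1" and "\<beta> > -1"
  shows "((\<lambda>x. ((1 - x) / 2) ^ s * jacobi_weight \<alpha> \<beta> x) has_integral
           2 powr (\<alpha> + \<beta> + 1) * Beta (\<alpha> + 1 + real s) (\<beta> + 1)) {-1<..<1}"
proof -
  define g where "g t = t powr (\<alpha> + real s) * (1 - t) powr \<beta>" for t :: real
  have "(g has_integral Beta (\<alpha> + 1 + real s) (\<beta> + 1)) (cbox 0 1)"
    unfolding g_def using has_integral_Beta_real[of "\<alpha> + 1 + real s" "\<beta> + 1"] assms by simp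
  moreover have "(\<lambda>x::real. 1 - 2 * x) ` {0..1} = {-1..1}"
  proof
    show "{-1..1} \<subseteq> (\<lambda>x::real. 1 - 2 * x) ` {0..1}"
    proof
      fix y :: real assume "y \<in> {-1..1}"
      then show "y \<in> (\<lambda>x::real. 1 - 2 * x) ` {0..1}"
        by (intro image_eqI[where x = "(1 - y) / 2"]) (auto simp: field_simps)
    qed
  qed auto
  ultimately have "((\<lambda>x. g (-1/2 * x + 1/2)) has_integral 2 * Beta (\<alpha> + 1 + real s) (\<beta> + 1)) {-1..1}"
    using has_integral_affinity[of g _ 0 1 "-1/2" "1/2"] by simp
  from has_integral_mult_right[OF this, of "2 powr (\<alpha> + \<beta>)"]
  have "((\<lambda>x. 2 powr (\<alpha> + \<beta>) * g (-1/2 * x + 1/2)) has_integral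
      2 powr (\<alpha> + \<beta> + 1) * Beta (\<alpha> + 1 + real s) (\<beta> + 1)) {-1<..<1}"
    by (simp add: has_integral_Icc_iff_Ioo powr_add mult_ac)
  moreover have "2 powr (\<alpha> + \<beta>) * g (-1/2 * x + 1/2) = ((1 - x) / 2) ^ s * jacobi_weight \<alpha> \<beta> x"
    if "x \<in> {-1<..<1}" for x
  proof -
    have "1 - x > 0" "1 + x > 0" using that by auto
    then have "g (-1/2 * x + 1/2) = ((1 - x) / 2) ^ s * ((1 - x) powr \<alpha> / 2 powr \<alpha>) * ((1 + x) powr \<beta> / 2 powr \<beta>)"
      by (simp add: g_def powr_add powr_realpow powr_divide field_simps)
    then show ?thesis
      by (simp add: jacobi_weight_def powr_add field_simps)
  qed
  ultimately show ?thesis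
    by (metis (no_types, lifting) has_integral_cong)
qed

lemma jacobi_moment:
  assumes "\<alpha> > -1" and "\<beta> > -1"
  shows "jacobi_integrable \<alpha> \<beta> (\<lambda>x. ((1 - x) / 2) ^ s)"
    and "jacobi_integral \<alpha> \<beta> (\<lambda>x. ((1 - x) / 2) ^ s) =
           2 powr (\<alpha> + \<beta> + 1) * Beta (\<alpha> + 1 + real s) (\<beta> + 1)"
  using set_integrable_if_nonneg_has_integral[OF _ _ _ has_integral_jacobi_moment[OF assms]]
  unfolding jacobi_integrable_def jacobi_integral_def by (auto simp: jacobi_weight_def)

lemma poly_eq_sum_powers_one_minus_x_half:
  fixes P :: "real poly"
  obtains c where "\<And>x. poly P x = (\<Sum>i\<le>degree P. c i * ((1 - x) / 2) ^ i)"
proof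
  define Q where "Q = pcompose P [:1, -2:]"
  fix x :: real
  have "poly P x = poly Q ((1 - x) / 2)"
    by (simp add: Q_def poly_pcompose field_simps)
  also have "\<dots> = (\<Sum>i\<le>degree P. coeff Q i * ((1 - x) / 2) ^ i)"
    by (simp add: poly_altdef Q_def degree_pcompose)
  finally show "poly P x = (\<Sum>i\<le>degree P. coeff Q i * ((1 - x) / 2) ^ i)" .
qed

lemma jacobi_integrable_poly:
  assumes "\<alpha> > -1" and "\<beta> > -1"
  shows "jacobi_integrable \<alpha> \<beta> (poly P)"
proof -
  obtain c where c: "\<And>x. poly P x = (\<Sum>i\<le>degree P. c i * ((1 - x) / 2) ^ i)"
    using poly_eq_sum_powers_one_minus_x_half[of P] by blast
  show ?thesis
    unfolding c[abs_def]
    by (intro jacobi_integrable_sum jacobi_integrable_cmult jacobi_moment(1)[OF assms])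
qed

lemma jacobi_integrable_poly_mult_power:
  assumes "\<alpha> > -1" and "\<beta> > -1"
  shows "jacobi_integrable \<alpha> \<beta> (\<lambda>x. poly P x * ((1 - x) / 2) ^ i)"
proof -
  have "poly (P * [:1/2, -1/2:] ^ i) = (\<lambda>x. poly P x * ((1 - x) / 2) ^ i)"
    by (simp add: fun_eq_iff poly_power diff_divide_distrib)
  then show ?thesis
    using jacobi_integrable_poly[OF assms] by metis
qed

section \<open>Alternating binomial sums\<close>

lemma alternating_binomial_sum_Suc:
  fixes f :: "nat \<Rightarrow> 'a::comm_ring_1"
  shows "(\<Sum>k\<le>Suc n. (-1)^k * of_nat (Suc n choose k) * f k) =
         (\<Sum>k\<le>n. (-1)^k * of_nat (n choose k) * (f k - f (Suc k)))"
proof -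
  have shift: "(\<Sum>k\<le>n. (-1)^Suc k * of_nat (n choose Suc k) * f (Suc k)) =
               (\<Sum>k\<le>n. (-1)^k * of_nat (n choose k) * f k) - f 0"
    using sum.atMost_Suc_shift[of "\<lambda>k. (-1)^k * of_nat (n choose k) * f k" n]
    by (simp add: binomial_eq_0)
  have "(\<Sum>k\<le>Suc n. (-1)^k * of_nat (Suc n choose k) * f k) =
        f 0 + (\<Sum>k\<le>n. (-1)^Suc k * of_nat (Suc n choose Suc k) * f (Suc k))"
    by (subst sum.atMost_Suc_shift) simp
  also have "\<dots> = f 0 + (\<Sum>k\<le>n. (-1)^Suc k * of_nat (n choose k) * f (Suc k))
                      + (\<Sum>k\<le>n. (-1)^Suc k * of_nat (n choose Suc k) * f (Suc k))"
    by (simp add: sum.distrib[symmetric] algebra_simps)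
  also have "\<dots> = (\<Sum>k\<le>n. (-1)^k * of_nat (n choose k) * (f k - f (Suc k)))"
    unfolding shift by (simp add: sum_subtractf right_diff_distrib sum_negf)
  finally show ?thesis .
qed

lemma alternating_binomial_sum_poly_eq_0:
  fixes P :: "'a::{idom,ring_char_0} poly"
  assumes "degree P < n"
  shows "(\<Sum>k\<le>n. (-1)^k * of_nat (n choose k) * poly P (of_nat k)) = 0"
  using assms
proof (induction n arbitrary: P)
  case (Suc n)
  define D where "D = P - pcompose P [:1, 1:]"
  have D_at: "poly D (of_nat k) = poly P (of_nat k) - poly P (of_nat (Suc k))" for k
    by (simp add: D_def poly_pcompose add.commute)
  have "(\<Sum>k\<le>Suc n. (-1)^k * of_nat (Suc n choose k) * poly P (of_nat k)) =
        (\<Sum>k\<le>n. (-1)^k * of_nat (n choose k) * poly D (of_nat k))"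
    unfolding D_at by (rule alternating_binomial_sum_Suc)
  also have "\<dots> = 0"
  proof (cases "degree P = 0")
    case True
    then obtain a where "P = [:a:]"
      by (rule degree_eq_zeroE)
    then have "D = 0"
      by (simp add: D_def)
    then show ?thesis by simp
  next
    case False
    have "degree D \<le> degree P"
      unfolding D_def by (intro degree_diff_le) (simp_all add: degree_pcompose)
    moreover have "coeff D (degree P) = 0"
      using lead_coeff_comp[of "[:1, 1:]" P] by (simp add: D_def degree_pcompose)
    ultimately have "degree D < degree P"
      using False by (metis antisym_conv1 degree_0 leading_coeff_0_iff)
    then show ?thesis
      by (rule Suc.IH[OF less_le_trans]) (use Suc.prems in simp)
  qed
  finally show ?case .
qed simp

lemma alternating_binomial_sum_reciprocal:
  fixes c :: real
  assumes "c > 0"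
  shows "(\<Sum>k\<le>n. (-1)^k * real (n choose k) / (c + real k)) = fact n / pochhammer c (n + 1)"
  using assms
proof (induction n arbitrary: c)
  case (Suc n)
  have "(\<Sum>k\<le>Suc n. (-1)^k * real (Suc n choose k) / (c + real k)) =
        (\<Sum>k\<le>n. (-1)^k * real (n choose k) * (1 / (c + real k) - 1 / (c + real (Suc k))))"
    using alternating_binomial_sum_Suc[where f = "\<lambda>k. 1 / (c + real k)"] by simp
  also have "\<dots> = (\<Sum>k\<le>n. (-1)^k * real (n choose k) / (c + real k)) -
                   (\<Sum>k\<le>n. (-1)^k * real (n choose k) / ((c + 1) + real k))"
    by (simp add: sum_subtractf[symmetric] algebra_simps)
  also have "\<dots> = fact n / pochhammer c (n + 1) - fact n / pochhammer (c + 1) (n + 1)"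
    using Suc by simp
  also have "\<dots> = fact (Suc n) / pochhammer c (Suc n + 1)"
  proof -
    define P Q R where "P = pochhammer c (n + 1)" and "Q = pochhammer (c + 1) (n + 1)"
      and "R = pochhammer c (Suc n + 1)"
    have "P > 0" and "Q > 0"
      using Suc.prems by (auto simp: P_def Q_def intro!: pochhammer_pos)
    have R_Q: "R = c * Q"
      by (simp add: R_def Q_def pochhammer_rec)
    have R_P: "R = P * (c + real n + 1)"
      by (simp add: R_def P_def pochhammer_rec' add_ac del: pochhammer_Suc)
    have "fact n / P = fact n * (c + real n + 1) / R"
      unfolding R_P using \<open>P > 0\<close> Suc.prems by simp
    moreover have "fact n / Q = fact n * c / R"
      unfolding R_Q using \<open>Q > 0\<close> Suc.prems by simp
    ultimately have "fact n / P - fact n / Q = fact (Suc n) / R"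
      by (simp add: diff_divide_distrib[symmetric] algebra_simps)
    then show ?thesis
      by (simp add: P_def Q_def R_def)
  qed
  finally show ?case .
qed simp

lemma alternating_binomial_sum_poly_div_linear:
  fixes R :: "real poly"
  assumes "c > 0" and "degree R \<le> n"
  shows "(\<Sum>k\<le>n. (-1)^k * real (n choose k) * (poly R (real k) / (c + real k))) =
         poly R (-c) * (fact n / pochhammer c (n + 1))"
proof -
  define S where "S = synthetic_div R (-c)"
  have partial_fraction: "poly R (real k) / (c + real k) = poly S (real k) + poly R (-c) / (c + real k)" for k
  proof -
    have "poly R (real k) = poly ([:- (-c), 1:] * S + [:poly R (-c):]) (real k)"
      unfolding S_def by (subst synthetic_div_correct') simp
    then have "poly R (real k) = (c + real k) * poly S (real k) + poly R (-c)"
      by (simp add: algebra_simps)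
    moreover have "c + real k > 0"
      using assms(1) by simp
    ultimately show ?thesis
      by (simp add: add_divide_distrib)
  qed
  have S_sum: "(\<Sum>k\<le>n. (-1)^k * of_nat (n choose k) * poly S (of_nat k)) = 0"
  proof (cases "degree R = 0")
    case True
    then have "S = 0"
      by (simp add: S_def synthetic_div_eq_0_iff)
    then show ?thesis
      by simp
  next
    case False
    with assms(2) have "degree S < n"
      by (simp add: S_def degree_synthetic_div)
    then show ?thesis
      by (rule alternating_binomial_sum_poly_eq_0)
  qed
  have "(\<Sum>k\<le>n. (-1)^k * real (n choose k) * (poly R (real k) / (c + real k))) =
        (\<Sum>k\<le>n. (-1)^k * of_nat (n choose k) * poly S (of_nat k)) +
        poly R (-c) * (\<Sum>k\<le>n. (-1)^k * real (n choose k) / (c + real k))"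
    by (simp add: partial_fraction ring_distribs sum.distrib sum_distrib_left mult_ac)
  also have "\<dots> = poly R (-c) * (fact n / pochhammer c (n + 1))"
    by (simp only: S_sum alternating_binomial_sum_reciprocal[OF assms(1)] add_0_left)
  finally show ?thesis .
qed

section \<open>Jacobi polynomials normalised at 1\<close>

lemma pochhammer_Gamma_pos: "(z::real) > 0 \<Longrightarrow> pochhammer z n = Gamma (z + real n) / Gamma z"
  by (rule pochhammer_Gamma) (auto dest: nonpos_Ints_nonpos)

lemma higher_pderiv_pcompose_linear:
  fixes p :: "'a::idom poly"
  shows "(pderiv ^^ j) (pcompose p [:a, b:]) = smult (b ^ j) (pcompose ((pderiv ^^ j) p) [:a, b:])"
  by (induction j) (simp_all add: pderiv_pcompose pderiv_smult pderiv_pCons mult.commute)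

lemma poly_higher_pderiv_0: "poly ((pderiv ^^ j) p) 0 = fact j * coeff p j"
  by (simp add: poly_0_coeff_0 coeff_higher_pderiv pochhammer_fact)

definition jacobi_coeff :: "real \<Rightarrow> real \<Rightarrow> nat \<Rightarrow> nat \<Rightarrow> real" where
  "jacobi_coeff \<alpha> \<beta> n k =
     (-1)^k * real (n choose k) * pochhammer (real n + \<alpha> + \<beta> + 1) k / pochhammer (\<alpha> + 1) k"

(* q_n = P_n^(alpha,beta) / P_n^(alpha,beta)(1), a terminating hypergeometric sum in t = (1 - x) / 2 *)
definition jacobi_poly :: "real \<Rightarrow> real \<Rightarrow> nat \<Rightarrow> real poly" where
  "jacobi_poly \<alpha> \<beta> n = pcompose (\<Sum>k\<le>n. monom (jacobi_coeff \<alpha> \<beta> n k) k) [:1/2, -1/2:]"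

lemma poly_jacobi_poly:
  "poly (jacobi_poly \<alpha> \<beta> n) x = (\<Sum>k\<le>n. jacobi_coeff \<alpha> \<beta> n k * ((1 - x) / 2) ^ k)"
  by (simp add: jacobi_poly_def poly_pcompose poly_sum poly_monom field_simps)

lemma degree_jacobi_poly: "degree (jacobi_poly \<alpha> \<beta> n) \<le> n"
  unfolding jacobi_poly_def degree_pcompose
  by (auto intro!: degree_sum_le order.trans[OF degree_monom_le])

lemma poly_higher_pderiv_jacobi_poly_1:
  "poly ((pderiv ^^ j) (jacobi_poly \<alpha> \<beta> n)) 1 = (-1)^j * jacobi_coeff \<alpha> \<beta> n j * fact j / 2^j"
proof -
  have "jacobi_coeff \<alpha> \<beta> n j = 0" if "j > n"
    using that by (simp add: jacobi_coeff_def)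
  then have "coeff (\<Sum>k\<le>n. monom (jacobi_coeff \<alpha> \<beta> n k) k) j = jacobi_coeff \<alpha> \<beta> n j"
    by (auto simp: coeff_sum coeff_monom)
  moreover have "(- (1/2::real)) ^ j = (-1)^j / 2^j"
    by (induction j) simp_all
  ultimately show ?thesis
    by (simp add: jacobi_poly_def higher_pderiv_pcompose_linear poly_pcompose poly_higher_pderiv_0 mult_ac)
qed

lemma jacobi_integral_jacobi_poly_power:
  assumes "\<alpha> > -1" and "\<beta> > -1"
  shows "jacobi_integral \<alpha> \<beta> (\<lambda>x. poly (jacobi_poly \<alpha> \<beta> n) x * ((1 - x) / 2) ^ m) =
         2 powr (\<alpha> + \<beta> + 1) * (\<Sum>k\<le>n. jacobi_coeff \<alpha> \<beta> n k * Beta (\<alpha> + 1 + real (k + m)) (\<beta> + 1))"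
proof -
  have "jacobi_integral \<alpha> \<beta> (\<lambda>x. poly (jacobi_poly \<alpha> \<beta> n) x * ((1 - x) / 2) ^ m) =
        jacobi_integral \<alpha> \<beta> (\<lambda>x. \<Sum>k\<le>n. jacobi_coeff \<alpha> \<beta> n k * ((1 - x) / 2) ^ (k + m))"
    by (simp add: poly_jacobi_poly sum_distrib_right power_add mult.assoc)
  also have "\<dots> = (\<Sum>k\<le>n. jacobi_coeff \<alpha> \<beta> n k * (2 powr (\<alpha> + \<beta> + 1) * Beta (\<alpha> + 1 + real (k + m)) (\<beta> + 1)))"
    using assms by (simp add: jacobi_integral_sum jacobi_integrable_cmult jacobi_moment jacobi_integral_cmult)
  finally show ?thesis
    by (simp add: sum_distrib_left mult_ac)
qed

lemma jacobi_coeff_mult_Beta: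
  assumes "\<alpha> > -1" and "\<beta> > -1" and "n \<ge> 1"
  shows "jacobi_coeff \<alpha> \<beta> n k * Beta (\<alpha> + 1 + real (k + m)) (\<beta> + 1) =
    Gamma (\<alpha> + 1) * Gamma (\<beta> + 1) / Gamma (real n + \<alpha> + \<beta> + 1) *
    ((-1)^k * real (n choose k) * pochhammer (\<alpha> + 1 + real k) m *
     (Gamma (real n + \<alpha> + \<beta> + 1 + real k) / Gamma (\<alpha> + \<beta> + 2 + real (k + m))))"
proof -
  have c: "real n + \<alpha> + \<beta> + 1 > 0"
    using assms by linarith
  have e1: "pochhammer (real n + \<alpha> + \<beta> + 1) k =
      Gamma (real n + \<alpha> + \<beta> + 1 + real k) / Gamma (real n + \<alpha> + \<beta> + 1)"
    using c by (rule pochhammer_Gamma_pos)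
  have e2: "pochhammer (\<alpha> + 1) k = Gamma (\<alpha> + 1 + real k) / Gamma (\<alpha> + 1)"
    using assms by (simp add: pochhammer_Gamma_pos)
  have e3: "pochhammer (\<alpha> + 1 + real k) m = Gamma (\<alpha> + 1 + real (k + m)) / Gamma (\<alpha> + 1 + real k)"
    using assms by (simp add: pochhammer_Gamma_pos add_ac)
  have ab: "\<alpha> + 1 + real (k + m) + (\<beta> + 1) = \<alpha> + \<beta> + 2 + real (k + m)"
    by simp
  have B: "Beta (\<alpha> + 1 + real (k + m)) (\<beta> + 1) =
      Gamma (\<alpha> + 1 + real (k + m)) * Gamma (\<beta> + 1) / Gamma (\<alpha> + \<beta> + 2 + real (k + m))"
    unfolding Beta_def ab ..
  have "Gamma (real n + \<alpha> + \<beta> + 1) > 0" "Gamma (\<alpha> + 1) > 0" "Gamma (\<alpha> + 1 + real k) > 0"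
    "Gamma (\<beta> + 1) > 0" "Gamma (\<alpha> + \<beta> + 2 + real (k + m)) > 0"
    using assms c by auto
  then show ?thesis
    unfolding jacobi_coeff_def e1 e2 e3 B by (simp add: field_simps)
qed

lemma jacobi_coeff_Beta_sum_eq_0:
  assumes "\<alpha> > -1" and "\<beta> > -1" and "m < n"
  shows "(\<Sum>k\<le>n. jacobi_coeff \<alpha> \<beta> n k * Beta (\<alpha> + 1 + real (k + m)) (\<beta> + 1)) = 0"
proof -
  \<comment> \<open>the Gamma factors of the summand form a polynomial of degree \<open>n - 1\<close> in \<open>k\<close>\<close>
  define P where "P = (\<Prod>i<m. [:\<alpha> + 1 + real i, 1:]) * (\<Prod>i<n - 1 - m. [:\<alpha> + \<beta> + 2 + real m + real i, 1:])"
  have "degree P < n"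
    unfolding P_def using assms(3)
    by (subst degree_mult_eq) (auto simp: degree_prod_eq_sum_degree)
  have P_at: "poly P (real k) = pochhammer (\<alpha> + 1 + real k) m *
      (Gamma (real n + \<alpha> + \<beta> + 1 + real k) / Gamma (\<alpha> + \<beta> + 2 + real (k + m)))" for k
  proof -
    have "Gamma (real n + \<alpha> + \<beta> + 1 + real k) / Gamma (\<alpha> + \<beta> + 2 + real (k + m)) =
          pochhammer (\<alpha> + \<beta> + 2 + real m + real k) (n - 1 - m)"
      using assms by (subst pochhammer_Gamma_pos) (auto simp: of_nat_diff add_ac)
    then show ?thesis
      by (simp add: P_def poly_prod pochhammer_prod atLeast0LessThan add_ac)
  qed
  have "(\<Sum>k\<le>n. jacobi_coeff \<alpha> \<beta> n k * Beta (\<alpha> + 1 + real (k + m)) (\<beta> + 1)) =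
     Gamma (\<alpha> + 1) * Gamma (\<beta> + 1) / Gamma (real n + \<alpha> + \<beta> + 1) *
     (\<Sum>k\<le>n. (-1)^k * of_nat (n choose k) * poly P (of_nat k))"
    unfolding sum_distrib_left
  proof (rule sum.cong[OF refl])
    fix k
    show "jacobi_coeff \<alpha> \<beta> n k * Beta (\<alpha> + 1 + real (k + m)) (\<beta> + 1) =
        Gamma (\<alpha> + 1) * Gamma (\<beta> + 1) / Gamma (real n + \<alpha> + \<beta> + 1) *
        ((-1)^k * of_nat (n choose k) * poly P (of_nat k))"
      using assms by (simp only: jacobi_coeff_mult_Beta P_at of_nat_id)
  qed
  also have "\<dots> = 0"
    using alternating_binomial_sum_poly_eq_0[OF \<open>degree P < n\<close>] by simp
  finally show ?thesis .
qed

lemma jacobi_coeff_Beta_sum_diag: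
  assumes "\<alpha> > -1" and "\<beta> > -1" and "n \<ge> 1"
  shows "(\<Sum>k\<le>n. jacobi_coeff \<alpha> \<beta> n k * Beta (\<alpha> + 1 + real (k + n)) (\<beta> + 1)) =
     Gamma (\<alpha> + 1) * Gamma (\<beta> + 1) / Gamma (real n + \<alpha> + \<beta> + 1) *
     ((-1)^n * pochhammer (\<beta> + 1) n * fact n / pochhammer (real n + \<alpha> + \<beta> + 1) (n + 1))"
proof -
  define c where "c = real n + \<alpha> + \<beta> + 1"
  define G where "G = Gamma (\<alpha> + 1) * Gamma (\<beta> + 1) / Gamma c"
  define R where "R = (\<Prod>i<n. [:\<alpha> + 1 + real i, 1:])"
  have "c > 0"
    using assms unfolding c_def by linarith
  have "degree R \<le> n"
    by (simp add: R_def degree_prod_eq_sum_degree)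
  have R_at: "poly R x = pochhammer (\<alpha> + 1 + x) n" for x
    by (simp add: R_def poly_prod pochhammer_prod atLeast0LessThan add_ac)
  have summand: "jacobi_coeff \<alpha> \<beta> n k * Beta (\<alpha> + 1 + real (k + n)) (\<beta> + 1) =
      G * ((-1)^k * real (n choose k) * (poly R (real k) / (c + real k)))" for k
  proof -
    have c_k: "c + real k \<notin> \<int>\<^sub>\<le>\<^sub>0" and "Gamma (c + real k) > 0"
      using \<open>c > 0\<close> by (auto dest: nonpos_Ints_nonpos)
    have shift: "\<alpha> + \<beta> + 2 + real (k + n) = c + real k + 1"
      by (simp add: c_def)
    have Gamma_ratio: "Gamma (c + real k) / Gamma (\<alpha> + \<beta> + 2 + real (k + n)) = 1 / (c + real k)"
      unfolding shift Gamma_plus1[OF c_k] using \<open>Gamma (c + real k) > 0\<close> by simp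
    have "jacobi_coeff \<alpha> \<beta> n k * Beta (\<alpha> + 1 + real (k + n)) (\<beta> + 1) =
        G * ((-1)^k * real (n choose k) * pochhammer (\<alpha> + 1 + real k) n *
             (Gamma (c + real k) / Gamma (\<alpha> + \<beta> + 2 + real (k + n))))"
      unfolding G_def c_def by (rule jacobi_coeff_mult_Beta[OF assms])
    also have "\<dots> = G * ((-1)^k * real (n choose k) * (poly R (real k) / (c + real k)))"
      unfolding Gamma_ratio R_at by simp
    finally show ?thesis .
  qed
  have "poly R (-c) = pochhammer (- (real n + \<beta>)) n"
    unfolding R_at c_def by (simp add: algebra_simps)
  also have "\<dots> = (-1)^n * pochhammer (\<beta> + 1) n"
    by (subst pochhammer_minus) (simp add: algebra_simps)
  finally have R_pole: "poly R (-c) = (-1)^n * pochhammer (\<beta> + 1) n" .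
  have "(\<Sum>k\<le>n. jacobi_coeff \<alpha> \<beta> n k * Beta (\<alpha> + 1 + real (k + n)) (\<beta> + 1)) =
      G * (\<Sum>k\<le>n. (-1)^k * real (n choose k) * (poly R (real k) / (c + real k)))"
    by (simp only: summand sum_distrib_left)
  also have "\<dots> = G * (poly R (-c) * (fact n / pochhammer c (n + 1)))"
    by (simp only: alternating_binomial_sum_poly_div_linear[OF \<open>c > 0\<close> \<open>degree R \<le> n\<close>])
  also have "\<dots> = G * ((-1)^n * pochhammer (\<beta> + 1) n * fact n / pochhammer c (n + 1))"
    by (simp add: R_pole)
  finally show ?thesis
    unfolding G_def c_def .
qed

lemma jacobi_integral_jacobi_poly_orthogonal:
  assumes "\<alpha> > -1" and "\<beta> > -1" and "degree P < n"
  shows "jacobi_integral \<alpha> \<beta> (\<lambda>x. poly (jacobi_poly \<alpha> \<beta> n) x * poly P x) = 0"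
proof -
  define q where "q = jacobi_poly \<alpha> \<beta> n"
  obtain c where c: "\<And>x. poly P x = (\<Sum>i\<le>degree P. c i * ((1 - x) / 2) ^ i)"
    using poly_eq_sum_powers_one_minus_x_half[of P] by blast
  have "jacobi_integral \<alpha> \<beta> (\<lambda>x. poly q x * poly P x) =
        jacobi_integral \<alpha> \<beta> (\<lambda>x. \<Sum>i\<le>degree P. c i * (poly q x * ((1 - x) / 2) ^ i))"
    unfolding c by (simp only: sum_distrib_left mult.left_commute)
  also have "\<dots> = (\<Sum>i\<le>degree P. c i * jacobi_integral \<alpha> \<beta> (\<lambda>x. poly q x * ((1 - x) / 2) ^ i))"
    using assms by (simp add: jacobi_integral_sum jacobi_integral_cmult jacobi_integrable_cmult
                              jacobi_integrable_poly_mult_power)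
  also have "\<dots> = 0"
  proof (intro sum.neutral ballI)
    fix i assume "i \<in> {..degree P}"
    then have "i < n"
      using assms(3) by simp
    then show "c i * jacobi_integral \<alpha> \<beta> (\<lambda>x. poly q x * ((1 - x) / 2) ^ i) = 0"
      using assms by (simp only: q_def jacobi_integral_jacobi_poly_power jacobi_coeff_Beta_sum_eq_0
                                 mult_zero_right)
  qed
  finally show ?thesis
    unfolding q_def .
qed

(* the squared norm of q_n; the formula is only claimed for n >= 1 *)
definition jacobi_sqnorm :: "real \<Rightarrow> real \<Rightarrow> nat \<Rightarrow> real" where
  "jacobi_sqnorm \<alpha> \<beta> n =
     2 powr (\<alpha> + \<beta> + 1) * Gamma (\<alpha> + 1)^2 * Gamma (real n + \<beta> + 1) * fact n /
     (Gamma (real n + \<alpha> + 1) * Gamma (real n + \<alpha> + \<beta> + 1) * (2 * real n + \<alpha> + \<beta> + 1))"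

lemma jacobi_sqnorm_pos:
  assumes "\<alpha> > -1" and "\<beta> > -1" and "n \<ge> 1"
  shows "jacobi_sqnorm \<alpha> \<beta> n > 0"
proof -
  have "real n + \<alpha> + \<beta> + 1 > 0"
    using assms by linarith
  moreover have "Gamma (\<alpha> + 1) > 0" and "Gamma (real n + \<alpha> + 1) > 0" and "Gamma (real n + \<beta> + 1) > 0"
    using assms by auto
  ultimately show ?thesis
    unfolding jacobi_sqnorm_def by (intro divide_pos_pos mult_pos_pos) auto
qed

lemma jacobi_sqnorm_eq_Beta_sum:
  assumes "\<alpha> > -1" and "\<beta> > -1" and "n \<ge> 1"
  shows "jacobi_coeff \<alpha> \<beta> n n * (2 powr (\<alpha> + \<beta> + 1) *
           (\<Sum>k\<le>n. jacobi_coeff \<alpha> \<beta> n k * Beta (\<alpha> + 1 + real (k + n)) (\<beta> + 1))) =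
         jacobi_sqnorm \<alpha> \<beta> n"
proof -
  define c where "c = real n + \<alpha> + \<beta> + 1"
  define d where "d = 2 * real n + \<alpha> + \<beta> + 1"
  have "c > 0" and "d > 0"
    using assms unfolding c_def d_def by linarith+
  have poch_c: "pochhammer c (n + 1) = pochhammer c n * d"
    by (simp add: c_def d_def pochhammer_rec' algebra_simps del: pochhammer_Suc)
  have poch_\<alpha>: "pochhammer (\<alpha> + 1) n = Gamma (real n + \<alpha> + 1) / Gamma (\<alpha> + 1)"
   and poch_\<beta>: "pochhammer (\<beta> + 1) n = Gamma (real n + \<beta> + 1) / Gamma (\<beta> + 1)"
    using assms by (simp_all add: pochhammer_Gamma_pos add_ac)
  have "pochhammer c n > 0" and "Gamma c > 0"
    and "Gamma (\<alpha> + 1) > 0" and "Gamma (\<beta> + 1) > 0"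
    and "Gamma (real n + \<alpha> + 1) > 0" and "Gamma (real n + \<beta> + 1) > 0"
    using assms \<open>c > 0\<close> by (auto intro: pochhammer_pos)
  moreover have "(-1::real) ^ n * (-1) ^ n = 1"
    by (simp flip: power_mult_distrib)
  ultimately show ?thesis
    unfolding jacobi_coeff_Beta_sum_diag[OF assms]
    unfolding jacobi_coeff_def jacobi_sqnorm_def c_def[symmetric] d_def[symmetric] poch_c poch_\<alpha> poch_\<beta>
    using \<open>d > 0\<close> by (simp add: field_simps power2_eq_square)
qed

lemma jacobi_integral_jacobi_poly_sq:
  assumes "\<alpha> > -1" and "\<beta> > -1" and "n \<ge> 1"
  shows "jacobi_integral \<alpha> \<beta> (\<lambda>x. poly (jacobi_poly \<alpha> \<beta> n) x * poly (jacobi_poly \<alpha> \<beta> n) x) =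
         jacobi_sqnorm \<alpha> \<beta> n"
proof -
  define q where "q = jacobi_poly \<alpha> \<beta> n"
  define B where "B m = (\<Sum>k\<le>n. jacobi_coeff \<alpha> \<beta> n k * Beta (\<alpha> + 1 + real (k + m)) (\<beta> + 1))" for m
  have "(\<lambda>x. poly q x * poly q x) =
        (\<lambda>x. \<Sum>m\<le>n. jacobi_coeff \<alpha> \<beta> n m * (poly q x * ((1 - x) / 2) ^ m))"
  proof
    fix x
    have "poly q x * poly q x = poly q x * (\<Sum>m\<le>n. jacobi_coeff \<alpha> \<beta> n m * ((1 - x) / 2) ^ m)"
      by (simp add: q_def poly_jacobi_poly)
    then show "poly q x * poly q x = (\<Sum>m\<le>n. jacobi_coeff \<alpha> \<beta> n m * (poly q x * ((1 - x) / 2) ^ m))"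
      by (simp add: sum_distrib_left mult.left_commute)
  qed
  then have "jacobi_integral \<alpha> \<beta> (\<lambda>x. poly q x * poly q x) =
             (\<Sum>m\<le>n. jacobi_coeff \<alpha> \<beta> n m * (2 powr (\<alpha> + \<beta> + 1) * B m))"
    using assms
    by (simp add: jacobi_integral_sum jacobi_integral_cmult jacobi_integrable_cmult
                  jacobi_integrable_poly_mult_power jacobi_integral_jacobi_poly_power q_def B_def)
  also have "\<dots> = jacobi_coeff \<alpha> \<beta> n n * (2 powr (\<alpha> + \<beta> + 1) * B n)"
  proof -
    have "B m = 0" if "m < n" for m
      unfolding B_def by (rule jacobi_coeff_Beta_sum_eq_0[OF assms(1,2) that])
    then show ?thesis
      by (simp add: lessThan_Suc_atMost[symmetric])
  qed
  also have "\<dots> = jacobi_sqnorm \<alpha> \<beta> n"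
    unfolding B_def by (rule jacobi_sqnorm_eq_Beta_sum[OF assms])
  finally show ?thesis
    unfolding q_def .
qed

section \<open>Identification with the orthonormal family\<close>

lemma graded_family_spans:
  fixes p :: "nat \<Rightarrow> 'a::field poly"
  assumes "\<And>i. i \<le> N \<Longrightarrow> degree (p i) = i" and "\<And>i. i \<le> N \<Longrightarrow> p i \<noteq> 0"
    and "degree Q \<le> N"
  shows "\<exists>c. Q = (\<Sum>i\<le>N. smult (c i) (p i))"
  using assms
proof (induction N arbitrary: Q)
  case 0
  obtain q where Q: "Q = [:q:]"
    using "0.prems"(3) by (metis degree_eq_zeroE le_zero_eq)
  obtain r where p: "p 0 = [:r:]"
    using "0.prems"(1)[of 0] by (metis degree_eq_zeroE order.refl)
  then have "r \<noteq> 0"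
    using "0.prems"(2)[of 0] by auto
  then show ?case
    by (intro exI[of _ "\<lambda>_. q / r"]) (simp add: Q p)
next
  case (Suc N)
  define d where "d = coeff Q (Suc N) / lead_coeff (p (Suc N))"
  have deg: "degree (p (Suc N)) = Suc N"
    using Suc.prems(1) by simp
  have "lead_coeff (p (Suc N)) \<noteq> 0"
    using Suc.prems(2)[of "Suc N"] by simp
  have "degree (Q - smult d (p (Suc N))) \<le> N"
  proof (rule degree_le, intro allI impI)
    fix i assume "N < i"
    then consider "i = Suc N" | "i > Suc N"
      by linarith
    then show "coeff (Q - smult d (p (Suc N))) i = 0"
    proof cases
      case 1
      then show ?thesis
        using \<open>lead_coeff (p (Suc N)) \<noteq> 0\<close> deg by (simp add: d_def)
    next
      case 2
      then show ?thesis
        using Suc.prems(3) deg by (simp add: coeff_eq_0)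
    qed
  qed
  with Suc.IH obtain c where "Q - smult d (p (Suc N)) = (\<Sum>i\<le>N. smult (c i) (p i))"
    using Suc.prems(1,2) by force
  then have "Q = (\<Sum>i\<le>Suc N. smult ((c(Suc N := d)) i) (p i))"
    by (simp add: algebra_simps)
  then show ?case
    by blast
qed

lemma orthonormal_jacobiD:
  assumes "orthonormal_jacobi \<alpha> \<beta> p"
  shows "degree (p n) = n" and "p n \<noteq> 0"
    and "jacobi_integrable \<alpha> \<beta> (\<lambda>x. poly (p m) x * poly (p n) x)"
    and "jacobi_integral \<alpha> \<beta> (\<lambda>x. poly (p m) x * poly (p n) x) = (if m = n then 1 else 0)"
  using assms unfolding orthonormal_jacobi_def jacobi_integrable_def jacobi_integral_def
  by (metis leading_coeff_0_iff less_irrefl)+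

lemma orthonormal_jacobi_expansion:
  assumes p: "orthonormal_jacobi \<alpha> \<beta> p" and "degree Q \<le> N"
  shows "Q = (\<Sum>i\<le>N. smult (jacobi_integral \<alpha> \<beta> (\<lambda>x. poly Q x * poly (p i) x)) (p i))"
proof -
  obtain c where c: "Q = (\<Sum>i\<le>N. smult (c i) (p i))"
    using graded_family_spans[of N p Q] orthonormal_jacobiD(1,2)[OF p] assms(2) by blast
  have "jacobi_integral \<alpha> \<beta> (\<lambda>x. poly Q x * poly (p k) x) = c k" if "k \<le> N" for k
  proof -
    have "(\<lambda>x. poly Q x * poly (p k) x) = (\<lambda>x. \<Sum>i\<le>N. c i * (poly (p i) x * poly (p k) x))"
      by (subst c) (simp add: poly_sum sum_distrib_right mult.assoc)
    then show ?thesis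
      using that by (simp add: jacobi_integral_sum jacobi_integral_cmult jacobi_integrable_cmult
                               orthonormal_jacobiD[OF p] if_distrib cong: if_cong)
  qed
  then show ?thesis
    by (subst c) (auto intro!: sum.cong)
qed

lemma jacobi_poly_eq_smult_orthonormal:
  assumes "\<alpha> > -1" and "\<beta> > -1" and p: "orthonormal_jacobi \<alpha> \<beta> p" and "n \<ge> 1"
  obtains \<kappa> where "jacobi_poly \<alpha> \<beta> n = smult \<kappa> (p n)" and "\<kappa>^2 = jacobi_sqnorm \<alpha> \<beta> n"
proof -
  define q where "q = jacobi_poly \<alpha> \<beta> n"
  define \<kappa> where "\<kappa> = jacobi_integral \<alpha> \<beta> (\<lambda>x. poly q x * poly (p n) x)"
  have "jacobi_integral \<alpha> \<beta> (\<lambda>x. poly q x * poly (p i) x) = 0" if "i < n" for i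
    unfolding q_def using assms(1,2) that
    by (simp add: jacobi_integral_jacobi_poly_orthogonal orthonormal_jacobiD(1)[OF p])
  then have "(\<Sum>i<n. smult (jacobi_integral \<alpha> \<beta> (\<lambda>x. poly q x * poly (p i) x)) (p i)) = 0"
    by (intro sum.neutral) simp
  moreover have "q = (\<Sum>i\<le>n. smult (jacobi_integral \<alpha> \<beta> (\<lambda>x. poly q x * poly (p i) x)) (p i))"
    using orthonormal_jacobi_expansion[OF p] degree_jacobi_poly unfolding q_def by blast
  ultimately have q: "q = smult \<kappa> (p n)"
    by (simp add: \<kappa>_def lessThan_Suc_atMost[symmetric])
  have "jacobi_sqnorm \<alpha> \<beta> n = jacobi_integral \<alpha> \<beta> (\<lambda>x. poly q x * poly q x)"
    using jacobi_integral_jacobi_poly_sq[OF assms(1,2,4)] by (simp add: q_def)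
  also have "(\<lambda>x. poly q x * poly q x) = (\<lambda>x. \<kappa>^2 * (poly (p n) x * poly (p n) x))"
    by (simp add: q power2_eq_square mult_ac)
  also have "jacobi_integral \<alpha> \<beta> \<dots> = \<kappa>^2"
    by (simp add: jacobi_integral_cmult orthonormal_jacobiD(4)[OF p])
  finally show ?thesis
    using that q by (simp add: q_def)
qed

lemma orthonormal_jacobi_higher_pderiv_at_1_sq:
  assumes "\<alpha> > -1" and "\<beta> > -1" and "orthonormal_jacobi \<alpha> \<beta> p" and "n \<ge> 1"
  shows "(poly ((pderiv ^^ j) (p n)) 1)^2 =
           (jacobi_coeff \<alpha> \<beta> n j * fact j / 2^j)^2 / jacobi_sqnorm \<alpha> \<beta> n"
proof -
  obtain \<kappa> where q: "jacobi_poly \<alpha> \<beta> n = smult \<kappa> (p n)" and \<kappa>: "\<kappa>^2 = jacobi_sqnorm \<alpha> \<beta> n"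
    using jacobi_poly_eq_smult_orthonormal[OF assms] .
  have "\<kappa> * poly ((pderiv ^^ j) (p n)) 1 = (-1)^j * (jacobi_coeff \<alpha> \<beta> n j * fact j / 2^j)"
    using poly_higher_pderiv_jacobi_poly_1[of j \<alpha> \<beta> n] by (simp add: q higher_pderiv_smult)
  moreover have "((-1::real)^j)^2 = 1"
    by (cases "even j") simp_all
  ultimately have "\<kappa>^2 * (poly ((pderiv ^^ j) (p n)) 1)^2 = (jacobi_coeff \<alpha> \<beta> n j * fact j / 2^j)^2"
    by (metis power_mult_distrib mult_1)
  moreover have "\<kappa>^2 > 0"
    using \<kappa> jacobi_sqnorm_pos[OF assms(1,2,4)] by simp
  ultimately show ?thesis
    using \<kappa> by (simp add: field_simps)
qed

section \<open>Asymptotics of the derivatives at 1\<close>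

lemma Gamma_ratio_asymptotic:
  fixes a b :: real
  assumes "a > 0" and "b > 0"
  shows "(\<lambda>n. Gamma (real n + a) / (Gamma (real n + b) * real n powr (a - b))) \<longlonglongrightarrow> 1"
proof -
  have "Gamma a > 0" and "Gamma b > 0"
    using assms by auto
  then have "Gamma a \<noteq> 0" and "Gamma b \<noteq> 0"
    by auto
  then have "(\<lambda>n. Gamma a / Gamma b * (Gamma_series' b n / Gamma_series' a n))
               \<longlonglongrightarrow> Gamma a / Gamma b * (Gamma b / Gamma a)"
    by (intro tendsto_intros Gamma_series'_LIMSEQ) auto
  with \<open>Gamma a \<noteq> 0\<close> \<open>Gamma b \<noteq> 0\<close>
  have lim: "(\<lambda>n. Gamma a / Gamma b * (Gamma_series' b n / Gamma_series' a n)) \<longlonglongrightarrow> 1"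
    by simp
  have "\<forall>\<^sub>F n in sequentially. Gamma a / Gamma b * (Gamma_series' b n / Gamma_series' a n) =
                   Gamma (real n + a) / (Gamma (real n + b) * real n powr (a - b))"
    using eventually_gt_at_top[of "0::nat"]
  proof eventually_elim
    case (elim n)
    have series: "Gamma_series' z n = fact (n - 1) * real n powr z / pochhammer z n" for z :: real
      using elim by (simp add: Gamma_series'_def powr_def)
    have "Gamma (real n + a) = Gamma a * pochhammer a n" and "Gamma (real n + b) = Gamma b * pochhammer b n"
      using assms \<open>Gamma a \<noteq> 0\<close> \<open>Gamma b \<noteq> 0\<close> by (simp_all add: pochhammer_Gamma_pos add_ac)
    moreover have "pochhammer a n > 0" and "pochhammer b n > 0" and "fact (n - 1) > (0::real)"
      using assms by (simp_all add: pochhammer_pos)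
    ultimately show ?case
      using assms elim by (simp add: series powr_diff field_simps)
  qed
  with lim show ?thesis
    by (rule Lim_transform_eventually)
qed

lemma pochhammer_shift_asymptotic: "(\<lambda>n. pochhammer (real n + d) j / real n ^ j) \<longlonglongrightarrow> 1"
proof -
  have "(\<lambda>n. \<Prod>i<j. (real n + d + real i) / real n) \<longlonglongrightarrow> (\<Prod>i<j. 1)"
    by (intro tendsto_prod) real_asymp
  then show ?thesis
    by (simp add: pochhammer_prod prod_dividef atLeast0LessThan)
qed

lemma binomial_asymptotic: "(\<lambda>n. real (n choose j) * fact j / real n ^ j) \<longlonglongrightarrow> 1"
proof -
  have "real (n choose j) * fact j = pochhammer (real n + (1 - real j)) j" for n
    by (simp add: binomial_gbinomial gbinomial_pochhammer' algebra_simps)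
  then show ?thesis
    using pochhammer_shift_asymptotic[of "1 - real j" j] by simp
qed

(* every factor but the last tends to 1 (the powers of n are written as a - b to match
   Gamma_ratio_asymptotic); the last one, (2n + alpha + beta + 1) / (n + alpha + beta + 1), tends to 2 *)
lemma orthonormal_jacobi_higher_pderiv_at_1_factorization:
  assumes "\<alpha> > -1" and "\<beta> > -1" and "orthonormal_jacobi \<alpha> \<beta> p" and "n \<ge> 1"
  shows "(poly ((pderiv ^^ j) (p n)) 1)^2 / real n powr (4 * real j + 2 * \<alpha> + 1) =
    (real (n choose j) * fact j / real n ^ j)^2 * (pochhammer (real n + (\<alpha> + \<beta> + 1)) j / real n ^ j)^2 *
    (Gamma (real n + (\<alpha> + 1)) / (Gamma (real n + 1) * real n powr (\<alpha> + 1 - 1))) *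
    (Gamma (real n + (\<alpha> + \<beta> + 2)) / (Gamma (real n + (\<beta> + 1)) * real n powr (\<alpha> + \<beta> + 2 - (\<beta> + 1)))) *
    ((2 * real n + \<alpha> + \<beta> + 1) / (real n + \<alpha> + \<beta> + 1)) /
    (4^j * pochhammer (\<alpha> + 1) j ^ 2 * 2 powr (\<alpha> + \<beta> + 1) * Gamma (\<alpha> + 1)^2)"
proof -
  define c where "c = real n + \<alpha> + \<beta> + 1"
  define d where "d = 2 * real n + \<alpha> + \<beta> + 1"
  have "c > 0" and "d > 0" and "real n > 0"
    using assms unfolding c_def d_def by linarith+
  have "c \<notin> \<int>\<^sub>\<le>\<^sub>0"
    using \<open>c > 0\<close> by (auto dest: nonpos_Ints_nonpos)
  then have Gamma_c: "Gamma (real n + (\<alpha> + \<beta> + 2)) = c * Gamma c"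
    using Gamma_plus1[of c] by (simp add: c_def add_ac)
  have fact: "fact n = Gamma (real n + 1)"
    using Gamma_fact[of n, where 'a = real] by (simp add: add.commute)
  have powr: "real n powr (4 * real j + 2 * \<alpha> + 1) =
      (real n ^ j)^4 * (real n powr (\<alpha> + 1 - 1) * real n powr (\<alpha> + \<beta> + 2 - (\<beta> + 1)))"
  proof -
    have "4 * real j + 2 * \<alpha> + 1 = real (j * 4) + ((\<alpha> + 1 - 1) + (\<alpha> + \<beta> + 2 - (\<beta> + 1)))"
      by simp
    then show ?thesis
      using \<open>real n > 0\<close> by (simp only: powr_add powr_realpow power_mult)
  qed
  have four: "(2::real) ^ j * 2 ^ j = 4 ^ j"
    by (simp flip: power_mult_distrib)
  have poch: "pochhammer (real n + (\<alpha> + \<beta> + 1)) j = pochhammer c j"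
    by (simp add: c_def add.assoc)
  have "Gamma c > 0" and "Gamma (real n + 1) > 0" and "Gamma (\<alpha> + 1) > 0"
    and "Gamma (real n + (\<alpha> + 1)) > 0" and "Gamma (real n + (\<beta> + 1)) > 0"
    and "pochhammer (\<alpha> + 1) j > 0"
    using assms \<open>c > 0\<close> by (auto intro: pochhammer_pos)
  with \<open>c > 0\<close> \<open>d > 0\<close> \<open>real n > 0\<close> show ?thesis
    unfolding orthonormal_jacobi_higher_pderiv_at_1_sq[OF assms] jacobi_coeff_def jacobi_sqnorm_def
      powr fact Gamma_c poch c_def[symmetric] d_def[symmetric]
    by (simp add: field_simps power2_eq_square power4_eq_xxxx four)
qed

lemma orthonormal_jacobi_higher_pderiv_at_1_asymptotic:
  assumes "\<alpha> > -1" and "\<beta> > -1" and "orthonormal_jacobi \<alpha> \<beta> p"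
  shows "(\<lambda>n. (poly ((pderiv ^^ j) (p n)) 1)^2 / real n powr (4 * real j + 2 * \<alpha> + 1))
           \<longlonglongrightarrow> 1 / (2 powr (2 * real j + \<alpha> + \<beta>) * Gamma (\<alpha> + real j + 1)^2)"
proof -
  define C where "C = 4^j * pochhammer (\<alpha> + 1) j ^ 2 * 2 powr (\<alpha> + \<beta> + 1) * Gamma (\<alpha> + 1)^2"
  have "pochhammer (\<alpha> + 1) j > 0" and "Gamma (\<alpha> + 1) > 0"
    using assms(1) by (simp_all add: pochhammer_pos)
  then have "C > 0"
    unfolding C_def by simp
  have "(\<lambda>n. (2 * real n + \<alpha> + \<beta> + 1) / (real n + \<alpha> + \<beta> + 1)) \<longlonglongrightarrow> 2"
    by real_asymp
  with \<open>C > 0\<close> have lim: "(\<lambda>n. (real (n choose j) * fact j / real n ^ j)^2 * (pochhammer (real n + (\<alpha> + \<beta> + 1)) j / real n ^ j)^2 *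
    (Gamma (real n + (\<alpha> + 1)) / (Gamma (real n + 1) * real n powr (\<alpha> + 1 - 1))) *
    (Gamma (real n + (\<alpha> + \<beta> + 2)) / (Gamma (real n + (\<beta> + 1)) * real n powr (\<alpha> + \<beta> + 2 - (\<beta> + 1)))) *
    ((2 * real n + \<alpha> + \<beta> + 1) / (real n + \<alpha> + \<beta> + 1)) / C) \<longlonglongrightarrow> 1^2 * 1^2 * 1 * 1 * 2 / C"
    using assms(1,2)
    by (intro tendsto_intros binomial_asymptotic pochhammer_shift_asymptotic Gamma_ratio_asymptotic) auto
  have eq: "\<forall>\<^sub>F n in sequentially. (real (n choose j) * fact j / real n ^ j)^2 * (pochhammer (real n + (\<alpha> + \<beta> + 1)) j / real n ^ j)^2 *
    (Gamma (real n + (\<alpha> + 1)) / (Gamma (real n + 1) * real n powr (\<alpha> + 1 - 1))) *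
    (Gamma (real n + (\<alpha> + \<beta> + 2)) / (Gamma (real n + (\<beta> + 1)) * real n powr (\<alpha> + \<beta> + 2 - (\<beta> + 1)))) *
    ((2 * real n + \<alpha> + \<beta> + 1) / (real n + \<alpha> + \<beta> + 1)) / C =
    (poly ((pderiv ^^ j) (p n)) 1)^2 / real n powr (4 * real j + 2 * \<alpha> + 1)"
    using eventually_ge_at_top[of 1]
    by eventually_elim (simp only: orthonormal_jacobi_higher_pderiv_at_1_factorization[OF assms] C_def)
  have const: "1^2 * 1^2 * 1 * 1 * 2 / C = 1 / (2 powr (2 * real j + \<alpha> + \<beta>) * Gamma (\<alpha> + real j + 1)^2)"
  proof -
    have g: "pochhammer (\<alpha> + 1) j * Gamma (\<alpha> + 1) = Gamma (\<alpha> + real j + 1)"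
      using assms(1) \<open>Gamma (\<alpha> + 1) > 0\<close>[THEN order_less_imp_not_eq2]
      by (simp add: pochhammer_Gamma_pos add_ac)
    have w: "(4::real)^j * 2 powr (\<alpha> + \<beta> + 1) = 2 * 2 powr (2 * real j + \<alpha> + \<beta>)"
    proof -
      have "(4::real)^j = 2 powr (2 * real j)"
        using powr_realpow[of 2 "2 * j"] by (simp add: power_mult)
      then have "(4::real)^j * 2 powr (\<alpha> + \<beta> + 1) = 2 powr (2 * real j + \<alpha> + \<beta> + 1)"
        by (simp add: powr_add mult_ac)
      also have "\<dots> = 2 * 2 powr (2 * real j + \<alpha> + \<beta>)"
        by (simp add: powr_add)
      finally show ?thesis .
    qed
    have "C = ((4::real)^j * 2 powr (\<alpha> + \<beta> + 1)) * (pochhammer (\<alpha> + 1) j * Gamma (\<alpha> + 1))^2"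
      unfolding C_def by (simp add: power_mult_distrib mult_ac)
    then show ?thesis
      unfolding g w by simp
  qed
  show ?thesis
    using Lim_transform_eventually[OF lim[unfolded const] eq] .
qed

section \<open>The Stolz--Cesaro theorem\<close>

lemma abs_diff_le_telescoping:
  fixes b c :: "nat \<Rightarrow> real"
  assumes "\<And>n. n \<ge> M \<Longrightarrow> \<bar>c (Suc n) - c n\<bar> \<le> \<delta> * (b (Suc n) - b n)" and "n \<ge> M"
  shows "\<bar>c n - c M\<bar> \<le> \<delta> * (b n - b M)"
  using assms(2)
proof (induction n rule: dec_induct)
  case (step n)
  have "\<bar>c (Suc n) - c M\<bar> \<le> \<bar>c (Suc n) - c n\<bar> + \<bar>c n - c M\<bar>"
    using abs_triangle_ineq[of "c (Suc n) - c n" "c n - c M"] by simp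
  also have "\<dots> \<le> \<delta> * (b (Suc n) - b n) + \<delta> * (b n - b M)"
    using step.IH assms(1)[OF step.hyps(1)] by (rule add_mono[rotated])
  also have "\<dots> = \<delta> * (b (Suc n) - b M)"
    by (simp add: algebra_simps)
  finally show ?case .
qed simp

lemma stolz_cesaro:
  fixes a b :: "nat \<Rightarrow> real"
  assumes b_inc: "\<And>n. b n < b (Suc n)" and b_lim: "filterlim b at_top sequentially"
    and ratio: "(\<lambda>n. (a (Suc n) - a n) / (b (Suc n) - b n)) \<longlonglongrightarrow> L"
  shows "(\<lambda>n. a n / b n) \<longlonglongrightarrow> L"
proof (rule tendstoI)
  fix \<epsilon> :: real assume "\<epsilon> > 0"
  define \<delta> where "\<delta> = \<epsilon> / 2"
  have "\<delta> > 0"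
    using \<open>\<epsilon> > 0\<close> by (simp add: \<delta>_def)
  define c where "c n = a n - L * b n" for n
  obtain M where M: "\<And>n. n \<ge> M \<Longrightarrow> \<bar>(a (Suc n) - a n) / (b (Suc n) - b n) - L\<bar> < \<delta>"
    and "b M > 0"
  proof -
    have "\<forall>\<^sub>F n in sequentially. \<bar>(a (Suc n) - a n) / (b (Suc n) - b n) - L\<bar> < \<delta> \<and> b n > 0"
      using tendstoD[OF ratio \<open>\<delta> > 0\<close>] filterlim_at_top_dense[THEN iffD1, OF b_lim, rule_format, of 0]
      by (auto simp: dist_real_def elim: eventually_elim2)
    then show thesis
      using that unfolding eventually_sequentially by (meson order.refl)
  qed
  have increment_bound: "\<bar>c (Suc n) - c n\<bar> \<le> \<delta> * (b (Suc n) - b n)" if "n \<ge> M" for n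
  proof -
    have "c (Suc n) - c n = ((a (Suc n) - a n) / (b (Suc n) - b n) - L) * (b (Suc n) - b n)"
      using b_inc[of n] by (simp add: c_def field_simps)
    then show ?thesis
      using M[OF that] b_inc[of n] by (simp add: abs_mult)
  qed
  have telescope: "\<bar>c n - c M\<bar> \<le> \<delta> * (b n - b M)" if "n \<ge> M" for n
    using increment_bound that by (rule abs_diff_le_telescoping)
  have "((\<lambda>n. \<bar>c M\<bar> / b n) \<longlongrightarrow> 0) sequentially"
    using b_lim by (intro tendsto_divide_0[OF tendsto_const] filterlim_at_top_imp_at_infinity)
  then have "\<forall>\<^sub>F n in sequentially. \<bar>c M\<bar> / b n < \<delta>"
    using \<open>\<delta> > 0\<close> by (auto dest: order_tendstoD(2))
  then show "\<forall>\<^sub>F n in sequentially. dist (a n / b n) L < \<epsilon>"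
    using eventually_ge_at_top[of M]
  proof eventually_elim
    case (elim n)
    have "b M \<le> b n"
      using elim(2) b_inc by (simp add: lift_Suc_mono_le less_imp_le)
    then have "b n > 0"
      using \<open>b M > 0\<close> by linarith
    have "\<bar>c n\<bar> \<le> \<bar>c n - c M\<bar> + \<bar>c M\<bar>"
      using abs_triangle_ineq[of "c n - c M" "c M"] by simp
    also have "\<dots> \<le> \<delta> * b n + \<bar>c M\<bar>"
      using telescope[OF elim(2)] mult_pos_pos[OF \<open>\<delta> > 0\<close> \<open>b M > 0\<close>]
      by (simp add: right_diff_distrib)
    finally have "\<bar>c n\<bar> / b n \<le> \<delta> + \<bar>c M\<bar> / b n"
      using \<open>b n > 0\<close> by (simp add: field_simps)
    moreover have "dist (a n / b n) L = \<bar>c n\<bar> / b n"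
      using \<open>b n > 0\<close> by (simp add: c_def dist_real_def field_simps abs_div)
    moreover have "\<epsilon> = 2 * \<delta>"
      by (simp add: \<delta>_def)
    ultimately show ?case
      using elim(1) by linarith
  qed
qed

lemma stolz_cesaro_powr:
  fixes a :: "nat \<Rightarrow> real"
  assumes "s > -1" and "(\<lambda>n. (a (Suc n) - a n) / real (Suc n) powr s) \<longlonglongrightarrow> L"
  shows "(\<lambda>n. a n / real n powr (s + 1)) \<longlonglongrightarrow> L / (s + 1)"
proof (rule stolz_cesaro)
  show "real n powr (s + 1) < real (Suc n) powr (s + 1)" for n
    using assms(1) by (intro powr_less_mono2) auto
  show "filterlim (\<lambda>n. real n powr (s + 1)) at_top sequentially"
    using assms(1) by real_asymp
  have "(\<lambda>n. real (Suc n) powr s / (real (Suc n) powr (s + 1) - real n powr (s + 1))) \<longlonglongrightarrow> inverse (s + 1)"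
    using assms(1) by real_asymp
  from tendsto_mult[OF assms(2) this]
  have "(\<lambda>n. (a (Suc n) - a n) / real (Suc n) powr s *
             (real (Suc n) powr s / (real (Suc n) powr (s + 1) - real n powr (s + 1)))) \<longlonglongrightarrow> L / (s + 1)"
    by (simp add: divide_inverse)
  moreover have "x / p * (p / d) = x / d" if "p \<noteq> 0" for x p d :: real
    using that by simp
  ultimately show "(\<lambda>n. (a (Suc n) - a n) / (real (Suc n) powr (s + 1) - real n powr (s + 1))) \<longlonglongrightarrow> L / (s + 1)"
    by simp
qed

section \<open>Growth of the kernel and of the eigenvalues\<close>

lemma kernel_jj_asymptotic:
  assumes "\<alpha> > -1" and "\<beta> > -1" and "orthonormal_jacobi \<alpha> \<beta> p"
  shows "(\<lambda>n. kernel_jj p j n / real n powr (4 * real j + 2 * \<alpha> + 2)) \<longlonglongrightarrow>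
           1 / (2 powr (2 * real j + \<alpha> + \<beta> + 1) * (2 * real j + \<alpha> + 1) * Gamma (\<alpha> + real j + 1)^2)"
proof -
  have "(\<lambda>n. (kernel_jj p j (Suc n) - kernel_jj p j n) / real (Suc n) powr (4 * real j + 2 * \<alpha> + 1))
          \<longlonglongrightarrow> 1 / (2 powr (2 * real j + \<alpha> + \<beta>) * Gamma (\<alpha> + real j + 1)^2)"
    using LIMSEQ_Suc[OF orthonormal_jacobi_higher_pderiv_at_1_asymptotic[OF assms, of j]]
    by (simp add: kernel_jj_def)
  moreover have "4 * real j + 2 * \<alpha> + 1 > -1"
    using assms(1) by simp
  ultimately have lim: "(\<lambda>n. kernel_jj p j n / real n powr (4 * real j + 2 * \<alpha> + 1 + 1)) \<longlonglongrightarrow>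
      1 / (2 powr (2 * real j + \<alpha> + \<beta>) * Gamma (\<alpha> + real j + 1)^2) / (4 * real j + 2 * \<alpha> + 1 + 1)"
    by (intro stolz_cesaro_powr)
  have exponent: "4 * real j + 2 * \<alpha> + 1 + 1 = 4 * real j + 2 * \<alpha> + 2"
    by simp
  have "Gamma (\<alpha> + real j + 1) > 0" and "2 * real j + \<alpha> + 1 > 0"
    using assms(1) by auto
  then have limit: "1 / (2 powr (2 * real j + \<alpha> + \<beta>) * Gamma (\<alpha> + real j + 1)^2) / (4 * real j + 2 * \<alpha> + 2) =
      1 / (2 powr (2 * real j + \<alpha> + \<beta> + 1) * (2 * real j + \<alpha> + 1) * Gamma (\<alpha> + real j + 1)^2)"
    by (simp add: powr_add field_simps)
  show ?thesis
    using lim unfolding exponent limit .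
qed

lemma lambda_tilde_sum_asymptotic:
  fixes j :: nat
  assumes "\<alpha> > -1" and "\<beta> > -1" and "orthonormal_jacobi \<alpha> \<beta> p"
  defines "A n \<equiv> \<Sum>i=j+1..n. (jac_lambda \<alpha> \<beta> i - jac_lambda \<alpha> \<beta> (i - 1)) * kernel_jj p j (i - 1)"
  shows "(\<lambda>n. A n / real n powr (4 * real j + 2 * \<alpha> + 4)) \<longlonglongrightarrow>
           1 / (2 powr (2 * real j + \<alpha> + \<beta> + 1) * (2 * real j + \<alpha> + 2) * (2 * real j + \<alpha> + 1) *
                Gamma (\<alpha> + real j + 1)^2)"
proof -
  define K where "K = 1 / (2 powr (2 * real j + \<alpha> + \<beta> + 1) * (2 * real j + \<alpha> + 1) * Gamma (\<alpha> + real j + 1)^2)"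
  have increment: "A (Suc n) - A n = (2 * real n + \<alpha> + \<beta> + 2) * kernel_jj p j n" if "n \<ge> j" for n
    using that by (simp add: A_def jac_lambda_def power2_eq_square algebra_simps)
  have "\<forall>\<^sub>F n in sequentially. kernel_jj p j n / real n powr (4 * real j + 2 * \<alpha> + 2) *
        ((2 * real n + \<alpha> + \<beta> + 2) * real n powr (4 * real j + 2 * \<alpha> + 2) / real (Suc n) powr (4 * real j + 2 * \<alpha> + 3)) =
      (A (Suc n) - A n) / real (Suc n) powr (4 * real j + 2 * \<alpha> + 3)"
    using eventually_ge_at_top[of "max 1 j"] by eventually_elim (simp add: increment)
  moreover have "(\<lambda>n. kernel_jj p j n / real n powr (4 * real j + 2 * \<alpha> + 2) *
        ((2 * real n + \<alpha> + \<beta> + 2) * real n powr (4 * real j + 2 * \<alpha> + 2) / real (Suc n) powr (4 * real j + 2 * \<alpha> + 3)))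
      \<longlonglongrightarrow> K * 2"
    unfolding K_def using assms(1)
    by (intro tendsto_mult kernel_jj_asymptotic[OF assms(1-3)]) real_asymp
  ultimately have "(\<lambda>n. (A (Suc n) - A n) / real (Suc n) powr (4 * real j + 2 * \<alpha> + 3)) \<longlonglongrightarrow> K * 2"
    by (rule Lim_transform_eventually[rotated])
  moreover have "4 * real j + 2 * \<alpha> + 3 > -1"
    using assms(1) by simp
  ultimately have lim: "(\<lambda>n. A n / real n powr (4 * real j + 2 * \<alpha> + 3 + 1)) \<longlonglongrightarrow> K * 2 / (4 * real j + 2 * \<alpha> + 3 + 1)"
    by (intro stolz_cesaro_powr)
  have exponent: "4 * real j + 2 * \<alpha> + 3 + 1 = 4 * real j + 2 * \<alpha> + 4"
    by simp
  have "Gamma (\<alpha> + real j + 1) > 0" and "2 * real j + \<alpha> + 1 > 0" and "2 * real j + \<alpha> + 2 > 0"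
    using assms(1) by auto
  then have "K * 2 / (4 * real j + 2 * \<alpha> + 4) = K / (2 * real j + \<alpha> + 2)"
    by (simp add: field_simps)
  then have limit: "K * 2 / (4 * real j + 2 * \<alpha> + 4) =
      1 / (2 powr (2 * real j + \<alpha> + \<beta> + 1) * (2 * real j + \<alpha> + 2) * (2 * real j + \<alpha> + 1) *
           Gamma (\<alpha> + real j + 1)^2)"
    by (simp add: K_def mult_ac)
  show ?thesis
    using lim unfolding exponent limit .
qed

theorem mainTheorem5:
  fixes \<alpha> \<beta> M :: real and j :: nat and p :: "nat \<Rightarrow> real poly"
  assumes "\<alpha> > -1" and "\<beta> > -1" and "M > 0"
    and "orthonormal_jacobi \<alpha> \<beta> p"
  shows "(\<lambda>n. lambda_tilde \<alpha> \<beta> M p j n / real n powr (4 * real j + 2 * \<alpha> + 4))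
           \<longlonglongrightarrow> M / (2 powr (2 * real j + \<alpha> + \<beta> + 1) * (2 * real j + \<alpha> + 2)
                  * (2 * real j + \<alpha> + 1) * (Gamma (\<alpha> + real j + 1)) ^ 2)"
proof -
  have "(\<lambda>n. jac_lambda \<alpha> \<beta> n / real n powr (4 * real j + 2 * \<alpha> + 4)) \<longlonglongrightarrow> 0"
    unfolding jac_lambda_def using assms(1) by real_asymp
  from tendsto_add[OF this tendsto_mult_left[OF lambda_tilde_sum_asymptotic[OF assms(1,2,4)], of M]]
  show ?thesis
    by (simp add: lambda_tilde_def add_divide_distrib)
qed

end
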